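(* Reduction Rule 3 is safe: if \((G',k')\) is obtained from an instance \((G,k)\) of Vertex Cover by applying Reduction Rule 3, then \(k'+MM(G')-2LP(G')\leq k+MM(G)-2LP(G)\).
   Context: All graphs are finite, undirected and simple. An instance of Vertex Cover is a pair \((G,k)\), \(k\in\mathbb{N}\). \(MM(G)\) is the size of a maximum matching. \(LPVC(G)\) is the LP: minimize \(\sum_v x_v\) subject to \(x_u+x_v\ge1\) for each edge \(\{u,v\}\) and \(0\le x_v\le1\); \(LP(G)\) is its optimum value. For \(X\subseteq V(G)\), \(N(X)\) is the set of vertices outside \(X\) adjacent to some vertex of \(X\); for an independent set \(Z\), \(\mathrm{surplus}(Z)=|N(Z)|-|Z|\). Reduction Rule 3 applies to \((G,k)\) when (i) the all-\(\frac12\) assignment is the unique optimum solution of \(LPVC(G)\), (ii) there is no independent set \(Z\) with \(\mathrm{surplus}(Z)=1\) and \(N(Z)\) non-independent, and (iii) there is an independent set \(Z\subseteq V(G)\) with \(\mathrm{surplus}(Z)=1\) such that \(N(Z)\) is an independent set in \(G\). It then removes \(Z\) and identifies the vertices of \(N(Z)\): \(G'\) is obtained from \(G\) by deleting \(Z\cup N(Z)\), adding a new vertex \(z\), and making \(z\) adjacent to every vertex of \(N(N(Z))\setminus Z\); and \(k'=k-|Z|\). *)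

theory Defs
  imports Complex_Main
begin

definition graph :: "'a set \<Rightarrow> 'a set set \<Rightarrow> bool" where
  "graph V E \<longleftrightarrow> finite V \<and> (\<forall>e\<in>E. \<exists>u v. e = {u, v} \<and> u \<noteq> v \<and> u \<in> V \<and> v \<in> V)"

definition independent :: "'a set set \<Rightarrow> 'a set \<Rightarrow> bool" where
  "independent E X \<longleftrightarrow> (\<forall>u\<in>X. \<forall>v\<in>X. {u, v} \<notin> E)"

definition nbh :: "'a set \<Rightarrow> 'a set set \<Rightarrow> 'a set \<Rightarrow> 'a set" where
  "nbh V E X = {v \<in> V - X. \<exists>u\<in>X. {u, v} \<in> E}"

definition surplus :: "'a set \<Rightarrow> 'a set set \<Rightarrow> 'a set \<Rightarrow> int" where
  "surplus V E Z = int (card (nbh V E Z)) - int (card Z)"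

definition matching :: "'a set set \<Rightarrow> 'a set set \<Rightarrow> bool" where
  "matching E M \<longleftrightarrow> M \<subseteq> E \<and> (\<forall>e1\<in>M. \<forall>e2\<in>M. e1 \<noteq> e2 \<longrightarrow> e1 \<inter> e2 = {})"

definition MM :: "'a set set \<Rightarrow> nat" where
  "MM E = Max (card ` {M. matching E M})"

definition lpvc_feasible :: "'a set \<Rightarrow> 'a set set \<Rightarrow> ('a \<Rightarrow> real) \<Rightarrow> bool" where
  "lpvc_feasible V E x \<longleftrightarrow>
     (\<forall>u v. {u, v} \<in> E \<longrightarrow> x u + x v \<ge> 1) \<and> (\<forall>v\<in>V. 0 \<le> x v \<and> x v \<le> 1)"

definition LP :: "'a set \<Rightarrow> 'a set set \<Rightarrow> real" where
  "LP V E = Inf {(\<Sum>v\<in>V. x v) | x. lpvc_feasible V E x}"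

definition lpvc_optimal :: "'a set \<Rightarrow> 'a set set \<Rightarrow> ('a \<Rightarrow> real) \<Rightarrow> bool" where
  "lpvc_optimal V E x \<longleftrightarrow> lpvc_feasible V E x \<and> (\<Sum>v\<in>V. x v) = LP V E"

definition half_unique_optimum :: "'a set \<Rightarrow> 'a set set \<Rightarrow> bool" where
  "half_unique_optimum V E \<longleftrightarrow> lpvc_optimal V E (\<lambda>_. 1/2) \<and>
     (\<forall>x. lpvc_optimal V E x \<longrightarrow> (\<forall>v\<in>V. x v = 1/2))"

definition rr3_vertices :: "'a set \<Rightarrow> 'a set set \<Rightarrow> 'a set \<Rightarrow> 'a \<Rightarrow> 'a set" where
  "rr3_vertices V E Z z = (V - (Z \<union> nbh V E Z)) \<union> {z}"

definition rr3_edges :: "'a set \<Rightarrow> 'a set set \<Rightarrow> 'a set \<Rightarrow> 'a \<Rightarrow> 'a set set" where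
  "rr3_edges V E Z z = {e \<in> E. e \<inter> (Z \<union> nbh V E Z) = {}}
      \<union> {{z, w} | w. w \<in> nbh V E (nbh V E Z) - Z}"

end

theory Submission
  imports Defs
begin

(*
  Safeness splits into LP(G) <= |Z| + LP(G') and MM(G') + |Z| <= MM(G).

  For the LP bound, an LPVC solution x of G' is pulled back to G by giving every vertex of
  N(Z) the value x(z) and every vertex of Z the value 1 - x(z); as |N(Z)| = |Z| + 1 this
  costs exactly |Z| more than x.

  For the matching bound, the unique half-integral optimum forces surplus(Y) >= 1 for every
  nonempty independent Y, so by Hall's theorem Z can be matched into N(Z) - {n} for any n.
  A maximum matching of G' uses at most one edge {z, w}; replacing it by an edge {n, w}
  with n in N(Z) gives a matching of G avoiding Z and N(Z) - {n}, to which the matching of Z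
  is added.
*)

section \<open>Hall's marriage theorem\<close>

lemma card_le_Suc_card_Diff_singleton: "card A \<le> Suc (card (A - {a}))"
  by (cases "finite A") (auto simp: card_Diff_singleton_if)

definition hall_condition :: "'a set \<Rightarrow> ('a \<Rightarrow> 'b set) \<Rightarrow> bool" where
  "hall_condition A N \<longleftrightarrow> (\<forall>S\<subseteq>A. card S \<le> card (\<Union>(N ` S)))"

lemma hall_condition_nonempty_finite:
  assumes "hall_condition A N" "a \<in> A"
  shows "N a \<noteq> {} \<and> finite (N a)"
proof -
  have "card {a} \<le> card (\<Union>(N ` {a}))"
    using assms unfolding hall_condition_def by blast
  then show ?thesis by (auto intro: card_ge_0_finite)
qed

lemma hall_condition_finite_Union:
  assumes "hall_condition A N" "S \<subseteq> A" "finite S"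
  shows "finite (\<Union>(N ` S))"
proof (rule finite_UN_I[OF assms(3)])
  fix a assume "a \<in> S"
  then show "finite (N a)" using hall_condition_nonempty_finite[OF assms(1)] assms(2) by blast
qed

lemma hall_condition_subset:
  assumes "hall_condition A N" "S \<subseteq> A"
  shows "hall_condition S N"
  using assms unfolding hall_condition_def by auto

lemma hall_condition_Diff_critical:
  assumes hall: "hall_condition A N" and "finite A" "S \<subseteq> A"
    and critical: "card (\<Union>(N ` S)) = card S"
  shows "hall_condition (A - S) (\<lambda>a. N a - \<Union>(N ` S))"
  unfolding hall_condition_def
proof (intro allI impI)
  fix T assume T: "T \<subseteq> A - S"
  define U where "U = \<Union>(N ` S)"
  have fin: "finite T" "finite S"
    using T \<open>finite A\<close> \<open>S \<subseteq> A\<close> by (auto intro: finite_subset)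
  then have fin_U: "finite U" "finite (\<Union>a\<in>T. N a - U)"
    using T \<open>S \<subseteq> A\<close> hall_condition_finite_Union[OF hall] by (auto simp: U_def)
  have "card T + card S = card (T \<union> S)"
    using T fin by (intro card_Un_disjoint[symmetric]) auto
  also have "\<dots> \<le> card (\<Union>(N ` (T \<union> S)))"
    using hall T \<open>S \<subseteq> A\<close> unfolding hall_condition_def
    by (metis Diff_subset Un_subset_iff subset_trans)
  also have "\<dots> \<le> card ((\<Union>a\<in>T. N a - U) \<union> U)"
    using fin_U by (intro card_mono) (auto simp: U_def)
  also have "\<dots> \<le> card (\<Union>a\<in>T. N a - U) + card U"
    by (rule card_Un_le)
  finally show "card T \<le> card (\<Union>a\<in>T. N a - U)"
    using critical by (simp add: U_def)
qed

lemma hall_condition_Diff_singleton: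
  assumes hall: "hall_condition A N" and "a \<in> A"
    and slack: "\<forall>S\<subseteq>A. S \<noteq> {} \<longrightarrow> S \<noteq> A \<longrightarrow> card S < card (\<Union>(N ` S))"
  shows "hall_condition (A - {a}) (\<lambda>x. N x - {b})"
  unfolding hall_condition_def
proof (intro allI impI)
  fix T assume T: "T \<subseteq> A - {a}"
  show "card T \<le> card (\<Union>x\<in>T. N x - {b})"
  proof (cases "T = {}")
    case False
    then have "card T < card (\<Union>(N ` T))"
      using slack T \<open>a \<in> A\<close> by blast
    moreover have "card (\<Union>(N ` T)) \<le> Suc (card (\<Union>(N ` T) - {b}))"
      by (rule card_le_Suc_card_Diff_singleton)
    ultimately show ?thesis by simp
  qed simp
qed

theorem Hall_marriage:
  assumes "finite A" "hall_condition A N"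
  shows "\<exists>f. inj_on f A \<and> (\<forall>a\<in>A. f a \<in> N a)"
  using assms
proof (induction "card A" arbitrary: A N rule: less_induct)
  case less
  note fin = \<open>finite A\<close> and hall = \<open>hall_condition A N\<close>
  show ?case
  proof (cases "\<exists>S. S \<subseteq> A \<and> S \<noteq> {} \<and> S \<noteq> A \<and> card (\<Union>(N ` S)) = card S")
    case True
    then obtain S where S: "S \<subseteq> A" "S \<noteq> {}" "S \<noteq> A" and critical: "card (\<Union>(N ` S)) = card S"
      by blast
    define U where "U = \<Union>(N ` S)"
    have "card S < card A"
      using S fin by (intro psubset_card_mono) auto
    then obtain f1 where f1: "inj_on f1 S" "\<forall>a\<in>S. f1 a \<in> N a"
      using less.hyps finite_subset[OF S(1) fin] hall_condition_subset[OF hall S(1)] by blast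
    have "card (A - S) < card A"
      using S fin by (intro psubset_card_mono) auto
    then obtain f2 where f2: "inj_on f2 (A - S)" "\<forall>a\<in>A - S. f2 a \<in> N a - U"
      using less.hyps finite_Diff[OF fin] hall_condition_Diff_critical[OF hall fin S(1) critical]
      unfolding U_def by blast
    define f where "f a = (if a \<in> S then f1 a else f2 a)" for a
    have "inj_on f S" using f1(1) inj_on_cong[of S f f1] by (simp add: f_def)
    moreover have "inj_on f (A - S)" using f2(1) inj_on_cong[of "A - S" f f2] by (simp add: f_def)
    moreover have "f ` S \<subseteq> U" "f ` (A - S) \<inter> U = {}"
      using f1(2) f2(2) by (auto simp: f_def U_def)
    ultimately have "inj_on f (S \<union> (A - S))"
      unfolding inj_on_Un by blast
    moreover have "S \<union> (A - S) = A" using S(1) by blast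
    moreover have "\<forall>a\<in>A. f a \<in> N a" using f1(2) f2(2) by (simp add: f_def)
    ultimately show ?thesis by metis
  next
    case False
    have slack: "\<forall>S\<subseteq>A. S \<noteq> {} \<longrightarrow> S \<noteq> A \<longrightarrow> card S < card (\<Union>(N ` S))"
    proof (intro allI impI)
      fix S assume S: "S \<subseteq> A" "S \<noteq> {}" "S \<noteq> A"
      then have "card S \<le> card (\<Union>(N ` S))" using hall unfolding hall_condition_def by blast
      moreover have "card (\<Union>(N ` S)) \<noteq> card S" using False S by blast
      ultimately show "card S < card (\<Union>(N ` S))" by simp
    qed
    show ?thesis
    proof (cases "A = {}")
      case False
      then obtain a where a: "a \<in> A" by blast
      then obtain b where b: "b \<in> N a"
        using hall_condition_nonempty_finite[OF hall] by blast
      obtain f where f: "inj_on f (A - {a})" "\<forall>x\<in>A - {a}. f x \<in> N x - {b}"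
        using less.hyps[OF card_Diff1_less[OF fin a] finite_Diff[OF fin]
            hall_condition_Diff_singleton[OF hall a slack]]
        by blast
      have "inj_on (f(a := b)) (A - {a})"
        using f(1) inj_on_cong[of "A - {a}" "f(a := b)" f] by simp
      moreover have "b \<notin> f(a := b) ` (A - {a})" using f(2) by auto
      ultimately have "inj_on (f(a := b)) (insert a (A - {a}))"
        unfolding inj_on_insert by simp
      then have "inj_on (f(a := b)) A" using a by (simp add: insert_absorb)
      then show ?thesis using f(2) b by auto
    qed simp
  qed
qed

section \<open>Graphs, matchings and the LP relaxation\<close>

lemma graph_edgeD:
  assumes "graph V E" "{u, v} \<in> E"
  shows "u \<in> V" "v \<in> V" "u \<noteq> v"
  using assms unfolding graph_def by (metis doubleton_eq_iff)+

lemma graph_edges_subset: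
  assumes "graph V E" "e \<in> E"
  shows "e \<subseteq> V"
proof -
  obtain u v where "e = {u, v}" using assms unfolding graph_def by blast
  then show ?thesis using graph_edgeD[OF assms(1)] assms(2) by simp
qed

lemma graph_finite_edges:
  assumes "graph V E"
  shows "finite E"
proof (rule finite_subset)
  show "E \<subseteq> Pow V" using graph_edges_subset[OF assms] by blast
  show "finite (Pow V)" using assms by (simp add: graph_def)
qed

lemma independent_edge_in_nbh:
  assumes "graph V E" "independent E Z" "{u, v} \<in> E" "u \<in> Z"
  shows "v \<in> nbh V E Z"
proof -
  have "v \<notin> Z" using assms(2-4) unfolding independent_def by blast
  then show ?thesis using graph_edgeD(2)[OF assms(1,3)] assms(3,4) unfolding nbh_def by blast
qed

lemma finite_matchings:
  assumes "finite E"
  shows "finite {M. matching E M}"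
proof -
  have "{M. matching E M} \<subseteq> Pow E" unfolding matching_def by auto
  then show ?thesis using assms by (meson finite_Pow_iff finite_subset)
qed

lemma card_le_MM:
  assumes "finite E" "matching E M"
  shows "card M \<le> MM E"
  unfolding MM_def using assms finite_matchings by (intro Max_ge) auto

lemma MM_attained:
  assumes "finite E"
  shows "\<exists>M. matching E M \<and> card M = MM E"
proof -
  have "matching E {}" unfolding matching_def by auto
  then have "MM E \<in> card ` {M. matching E M}"
    unfolding MM_def using assms finite_matchings by (intro Max_in) auto
  then show ?thesis by auto
qed

lemma matching_insert:
  assumes "matching E M" "e \<in> E" "\<forall>f\<in>M. e \<inter> f = {}"
  shows "matching E (insert e M)"
  using assms unfolding matching_def by (auto simp: Int_commute)

lemma matching_Un:
  assumes M1: "matching E M1" and M2: "matching E M2"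
    and disjoint: "\<forall>e1\<in>M1. \<forall>e2\<in>M2. e1 \<inter> e2 = {}"
  shows "matching E (M1 \<union> M2)"
  unfolding matching_def
proof (intro conjI ballI impI)
  show "M1 \<union> M2 \<subseteq> E" using M1 M2 unfolding matching_def by blast
  fix e1 e2 assume e: "e1 \<in> M1 \<union> M2" "e2 \<in> M1 \<union> M2" "e1 \<noteq> e2"
  consider "e1 \<in> M1" "e2 \<in> M1" | "e1 \<in> M2" "e2 \<in> M2" | "e1 \<in> M1" "e2 \<in> M2" | "e1 \<in> M2" "e2 \<in> M1"
    using e by blast
  then show "e1 \<inter> e2 = {}"
  proof cases
    case 4
    then have "e2 \<inter> e1 = {}" using disjoint by blast
    then show ?thesis by (simp add: Int_commute)
  qed (use e M1 M2 disjoint in \<open>auto simp: matching_def\<close>)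
qed

lemma matching_star:
  assumes "inj_on f Z" "\<forall>a\<in>Z. f a \<notin> Z \<and> {a, f a} \<in> E"
  shows "matching E ((\<lambda>a. {a, f a}) ` Z)" "card ((\<lambda>a. {a, f a}) ` Z) = card Z"
proof -
  show "matching E ((\<lambda>a. {a, f a}) ` Z)"
    using assms unfolding matching_def inj_on_def by auto
  have "inj_on (\<lambda>a. {a, f a}) Z"
    using assms(2) by (auto simp: inj_on_def doubleton_eq_iff)
  then show "card ((\<lambda>a. {a, f a}) ` Z) = card Z" by (rule card_image)
qed

lemma LP_le:
  assumes "lpvc_feasible V E x"
  shows "LP V E \<le> (\<Sum>v\<in>V. x v)"
  unfolding LP_def
proof (rule cInf_lower)
  show "bdd_below {\<Sum>v\<in>V. x v |x. lpvc_feasible V E x}"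
    unfolding bdd_below_def lpvc_feasible_def by (rule exI[of _ 0]) (auto intro: sum_nonneg)
qed (use assms in blast)

lemma LP_half:
  assumes "half_unique_optimum V E"
  shows "LP V E = real (card V) / 2"
  using assms unfolding half_unique_optimum_def lpvc_optimal_def by simp

lemma card_less_card_nbh:
  assumes g: "graph V E" and h: "half_unique_optimum V E"
    and Y: "Y \<subseteq> V" "independent E Y" "Y \<noteq> {}"
  shows "card Y < card (nbh V E Y)"
proof (rule ccontr)
  assume "\<not> card Y < card (nbh V E Y)"
  define NY where "NY = nbh V E Y"
  define x where "x v = (if v \<in> Y then 0 else if v \<in> NY then 1 else 1/2 :: real)" for v
  have fin: "finite V" using g unfolding graph_def by auto
  have NY: "NY \<subseteq> V" "Y \<inter> NY = {}" unfolding NY_def nbh_def by auto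
  have feasible: "lpvc_feasible V E x"
    unfolding lpvc_feasible_def
  proof (intro conjI allI impI ballI)
    fix u v assume e: "{u, v} \<in> E"
    moreover have "{v, u} \<in> E" using e by (simp add: insert_commute)
    ultimately have "u \<in> Y \<Longrightarrow> v \<in> NY" "v \<in> Y \<Longrightarrow> u \<in> NY"
      using independent_edge_in_nbh[OF g Y(2)] unfolding NY_def by blast+
    then show "1 \<le> x u + x v" using NY(2) by (auto simp: x_def)
  qed (auto simp: x_def)
  have "x v = 1/2 - (if v \<in> Y then 1/2 else 0) + (if v \<in> NY then 1/2 else 0)" for v
    using NY(2) by (auto simp: x_def)
  then have "(\<Sum>v\<in>V. x v) = real (card V) / 2 - real (card Y) / 2 + real (card NY) / 2"
    using fin Y(1) NY(1)
    by (simp add: sum.distrib sum_subtractf sum.If_cases Int_absorb1)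
  also have "\<dots> \<le> LP V E"
    using \<open>\<not> card Y < card (nbh V E Y)\<close> LP_half[OF h] by (simp add: NY_def)
  finally have "lpvc_optimal V E x"
    using LP_le[OF feasible] feasible unfolding lpvc_optimal_def by linarith
  moreover obtain y where "y \<in> Y" using Y(3) by blast
  ultimately show False
    using h Y(1) unfolding half_unique_optimum_def by (force simp: x_def)
qed

lemma independent_matchable_into_nbh:
  assumes g: "graph V E" and h: "half_unique_optimum V E"
    and Z: "Z \<subseteq> V" "independent E Z"
  shows "\<exists>f. inj_on f Z \<and> (\<forall>a\<in>Z. f a \<in> nbh V E Z - {n} \<and> {a, f a} \<in> E)"
proof -
  define N where "N a = {v \<in> nbh V E Z - {n}. {a, v} \<in> E}" for a
  have fin: "finite V" "finite Z" using g finite_subset[OF Z(1)] unfolding graph_def by auto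
  have "hall_condition Z N"
    unfolding hall_condition_def
  proof (intro allI impI)
    fix S assume S: "S \<subseteq> Z"
    show "card S \<le> card (\<Union>(N ` S))"
    proof (cases "S = {}")
      case False
      have "independent E S" using Z(2) S unfolding independent_def by blast
      then have "card S < card (nbh V E S)"
        using card_less_card_nbh[OF g h] S Z(1) False by blast
      also have "\<dots> \<le> Suc (card (nbh V E S - {n}))"
        by (rule card_le_Suc_card_Diff_singleton)
      also have "card (nbh V E S - {n}) \<le> card (\<Union>(N ` S))"
      proof (rule card_mono)
        show "finite (\<Union>(N ` S))"
          by (rule finite_subset[OF _ fin(1)]) (auto simp: N_def nbh_def)
        show "nbh V E S - {n} \<subseteq> \<Union>(N ` S)"
        proof
          fix v assume "v \<in> nbh V E S - {n}"
          then obtain u where u: "u \<in> S" "{u, v} \<in> E" "v \<noteq> n"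
            unfolding nbh_def by blast
          then have "v \<in> nbh V E Z"
            using independent_edge_in_nbh[OF g Z(2)] S by blast
          then show "v \<in> \<Union>(N ` S)" using u unfolding N_def by blast
        qed
      qed
      finally show ?thesis by simp
    qed simp
  qed
  then obtain f where "inj_on f Z" "\<forall>a\<in>Z. f a \<in> N a"
    using Hall_marriage[OF fin(2)] by blast
  then show ?thesis unfolding N_def by auto
qed

section \<open>Reduction Rule 3\<close>

definition rr3_lift :: "'a set \<Rightarrow> 'a set set \<Rightarrow> 'a set \<Rightarrow> 'a \<Rightarrow> ('a \<Rightarrow> real) \<Rightarrow> 'a \<Rightarrow> real" where
  "rr3_lift V E Z z x v =
     (if v \<in> Z then 1 - x z else if v \<in> nbh V E Z then x z else x v)"

lemma rr3_lift_feasible: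
  assumes g: "graph V E" and Z: "independent E Z" "independent E (nbh V E Z)"
    and feasible: "lpvc_feasible (rr3_vertices V E Z z) (rr3_edges V E Z z) x"
  shows "lpvc_feasible V E (rr3_lift V E Z z x)"
proof -
  define NZ where "NZ = nbh V E Z"
  define y where "y = rr3_lift V E Z z x"
  have bounds: "0 \<le> x v \<and> x v \<le> 1" if "v = z \<or> v \<in> V - (Z \<union> NZ)" for v
    using feasible that unfolding lpvc_feasible_def rr3_vertices_def NZ_def by blast
  have NZ: "Z \<inter> NZ = {}" unfolding NZ_def nbh_def by blast
  have covered: "1 \<le> y u + y v" if e: "{u, v} \<in> E" and u: "u \<in> Z \<union> NZ" for u v
  proof (cases "u \<in> Z")
    case True
    then have "v \<in> NZ" using independent_edge_in_nbh[OF g Z(1) e] by (simp add: NZ_def)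
    then show ?thesis using True NZ by (auto simp: y_def rr3_lift_def NZ_def)
  next
    case False
    have "v \<notin> NZ" using Z(2) u False e unfolding independent_def NZ_def by blast
    show ?thesis
    proof (cases "v \<in> Z")
      case False
      have "v \<in> nbh V E NZ - Z"
        using u \<open>u \<notin> Z\<close> \<open>v \<notin> Z\<close> \<open>v \<notin> NZ\<close> e graph_edgeD[OF g e] by (auto simp: nbh_def)
      then have "{z, v} \<in> rr3_edges V E Z z" unfolding rr3_edges_def NZ_def by blast
      then have "1 \<le> x z + x v" using feasible unfolding lpvc_feasible_def by blast
      then show ?thesis
        using u \<open>u \<notin> Z\<close> \<open>v \<notin> Z\<close> \<open>v \<notin> NZ\<close> by (simp add: y_def rr3_lift_def NZ_def)
    qed (use u False in \<open>simp add: y_def rr3_lift_def NZ_def\<close>)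
  qed
  have "1 \<le> y u + y v" if e: "{u, v} \<in> E" for u v
  proof -
    have e': "{v, u} \<in> E" using e by (simp add: insert_commute)
    consider "u \<in> Z \<union> NZ" | "v \<in> Z \<union> NZ" | "u \<notin> Z \<union> NZ" "v \<notin> Z \<union> NZ" by blast
    then show ?thesis
    proof cases
      case 2 then show ?thesis using covered[OF e'] by simp
    next
      case 3
      then have "{u, v} \<in> rr3_edges V E Z z"
        using e unfolding rr3_edges_def NZ_def by blast
      then show ?thesis
        using feasible 3 unfolding lpvc_feasible_def by (simp add: y_def rr3_lift_def NZ_def)
    qed (use covered[OF e] in blast)
  qed
  moreover have "0 \<le> y v \<and> y v \<le> 1" if "v \<in> V" for v
    using bounds[of z] bounds[of v] that by (auto simp: y_def rr3_lift_def NZ_def)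
  ultimately show ?thesis unfolding lpvc_feasible_def y_def by blast
qed

lemma sum_rr3_lift:
  assumes "finite V" "Z \<subseteq> V" "surplus V E Z = 1" "z \<notin> V"
  shows "(\<Sum>v\<in>V. rr3_lift V E Z z x v) = real (card Z) + (\<Sum>v\<in>rr3_vertices V E Z z. x v)"
proof -
  define NZ where "NZ = nbh V E Z"
  define R where "R = V - (Z \<union> NZ)"
  define y where "y = rr3_lift V E Z z x"
  have NZ: "NZ \<subseteq> V" "Z \<inter> NZ = {}" unfolding NZ_def nbh_def by auto
  have fin: "finite Z" "finite NZ" "finite R"
    using assms(1) finite_subset[OF assms(2)] finite_subset[OF NZ(1)] by (auto simp: R_def)
  have card_NZ: "real (card NZ) = real (card Z) + 1"
    using assms(3) unfolding surplus_def NZ_def by linarith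
  have "V = (Z \<union> NZ) \<union> R" "(Z \<union> NZ) \<inter> R = {}" using assms(2) NZ(1) by (auto simp: R_def)
  then have "(\<Sum>v\<in>V. y v) = (\<Sum>v\<in>Z. y v) + (\<Sum>v\<in>NZ. y v) + (\<Sum>v\<in>R. y v)"
    using fin NZ(2) by (simp add: sum.union_disjoint)
  also have "(\<Sum>v\<in>Z. y v) = (\<Sum>v\<in>Z. 1 - x z)"
    by (rule sum.cong) (simp_all add: y_def rr3_lift_def)
  also have "(\<Sum>v\<in>NZ. y v) = (\<Sum>v\<in>NZ. x z)"
    by (rule sum.cong) (use NZ(2) in \<open>auto simp: y_def rr3_lift_def NZ_def\<close>)
  also have "(\<Sum>v\<in>R. y v) = (\<Sum>v\<in>R. x v)"
    by (rule sum.cong) (simp_all add: y_def rr3_lift_def NZ_def R_def)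
  also have "(\<Sum>v\<in>Z. 1 - x z) + (\<Sum>v\<in>NZ. x z) + (\<Sum>v\<in>R. x v)
      = real (card Z) + (x z + (\<Sum>v\<in>R. x v))"
    using card_NZ by (simp add: algebra_simps)
  also have "x z + (\<Sum>v\<in>R. x v) = (\<Sum>v\<in>rr3_vertices V E Z z. x v)"
    using fin assms(4) by (simp add: rr3_vertices_def R_def NZ_def)
  finally show ?thesis unfolding y_def .
qed

lemma LP_le_LP_rr3:
  assumes g: "graph V E" and Z: "Z \<subseteq> V" "independent E Z" "surplus V E Z = 1"
    "independent E (nbh V E Z)" and z: "z \<notin> V"
  shows "LP V E \<le> real (card Z) + LP (rr3_vertices V E Z z) (rr3_edges V E Z z)"
proof -
  have "LP V E - real (card Z) \<le> LP (rr3_vertices V E Z z) (rr3_edges V E Z z)"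
    unfolding LP_def[of "rr3_vertices V E Z z"]
  proof (rule cInf_greatest)
    have "lpvc_feasible (rr3_vertices V E Z z) (rr3_edges V E Z z) (\<lambda>_. 1)"
      unfolding lpvc_feasible_def by simp
    then show "{\<Sum>v\<in>rr3_vertices V E Z z. x v |x.
        lpvc_feasible (rr3_vertices V E Z z) (rr3_edges V E Z z) x} \<noteq> {}" by blast
  next
    fix s assume "s \<in> {\<Sum>v\<in>rr3_vertices V E Z z. x v |x.
        lpvc_feasible (rr3_vertices V E Z z) (rr3_edges V E Z z) x}"
    then obtain x where s: "s = (\<Sum>v\<in>rr3_vertices V E Z z. x v)"
      and feasible: "lpvc_feasible (rr3_vertices V E Z z) (rr3_edges V E Z z) x" by blast
    have "LP V E \<le> (\<Sum>v\<in>V. rr3_lift V E Z z x v)"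
      by (rule LP_le[OF rr3_lift_feasible[OF g Z(2,4) feasible]])
    also have "\<dots> = real (card Z) + s"
      using sum_rr3_lift[OF _ Z(1,3) z] g s unfolding graph_def by simp
    finally show "LP V E - real (card Z) \<le> s" by simp
  qed
  then show ?thesis by simp
qed

lemma finite_rr3_edges:
  assumes "graph V E"
  shows "finite (rr3_edges V E Z z)"
proof -
  have "rr3_edges V E Z z \<subseteq> E \<union> (\<lambda>w. {z, w}) ` V"
    unfolding rr3_edges_def nbh_def by blast
  then show ?thesis
    using graph_finite_edges[OF assms] assms unfolding graph_def
    by (meson finite_Un finite_imageI finite_subset)
qed

lemma rr3_edgesE:
  assumes "e \<in> rr3_edges V E Z z"
  obtains "e \<in> E" "e \<inter> (Z \<union> nbh V E Z) = {}"
    | w where "e = {z, w}" "w \<in> nbh V E (nbh V E Z) - Z"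
  using assms unfolding rr3_edges_def by blast

lemma rr3_matching_lift:
  assumes g: "graph V E" and z: "z \<notin> V" and "nbh V E Z \<noteq> {}"
    and M': "matching (rr3_edges V E Z z) M'" "finite M'"
  shows "\<exists>M n. matching E M \<and> card M = card M' \<and> (\<forall>e\<in>M. e \<inter> (Z \<union> (nbh V E Z - {n})) = {})"
proof -
  define NZ where "NZ = nbh V E Z"
  have z_new: "z \<notin> e" if "e \<in> E" for e using graph_edges_subset[OF g that] z by blast
  have M'_edges: "e \<in> rr3_edges V E Z z" if "e \<in> M'" for e
    using that M'(1) unfolding matching_def by blast
  have old_edges: "e \<in> E \<and> e \<inter> (Z \<union> NZ) = {}" if "e \<in> M'" "z \<notin> e" for e
    using M'_edges[OF that(1)] that(2) unfolding NZ_def by (cases rule: rr3_edgesE) auto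
  show ?thesis
  proof (cases "\<exists>e\<in>M'. z \<in> e")
    case False
    then have "matching E M'" "\<forall>e\<in>M'. e \<inter> (Z \<union> (NZ - {n})) = {}" for n
      using old_edges M'(1) unfolding matching_def by blast+
    then show ?thesis unfolding NZ_def by blast
  next
    case True
    then obtain e0 where e0: "e0 \<in> M'" "z \<in> e0" by blast
    obtain w where w: "e0 = {z, w}" "w \<in> nbh V E NZ - Z"
      using M'_edges[OF e0(1)] z_new e0(2) unfolding NZ_def by (cases rule: rr3_edgesE) auto
    then obtain n where n: "n \<in> NZ" "{n, w} \<in> E" "w \<notin> NZ"
      unfolding nbh_def by blast
    have rest: "e \<in> E \<and> e \<inter> (Z \<union> NZ) = {} \<and> w \<notin> e" if "e \<in> M' - {e0}" for e
    proof -
      have "e \<inter> e0 = {}" using that e0(1) M'(1) unfolding matching_def by blast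
      then show ?thesis using old_edges[of e] that w(1) by blast
    qed
    define M where "M = insert {n, w} (M' - {e0})"
    have "matching E (M' - {e0})" using rest M'(1) unfolding matching_def by blast
    then have "matching E M"
      unfolding M_def using rest n by (intro matching_insert) blast+
    moreover have "card M = card M'"
    proof -
      have "{n, w} \<notin> M' - {e0}" using rest n(1) by blast
      moreover have "card M' > 0" using e0(1) M'(2) card_gt_0_iff by blast
      ultimately show ?thesis using e0(1) M'(2) by (simp add: M_def card_Diff_singleton)
    qed
    moreover have "\<forall>e\<in>M. e \<inter> (Z \<union> (NZ - {n})) = {}"
    proof -
      have "n \<notin> Z" using n(1) unfolding NZ_def nbh_def by blast
      then show ?thesis using rest w(2) n(3) unfolding M_def by blast
    qed
    ultimately show ?thesis unfolding NZ_def by blast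
  qed
qed

lemma MM_rr3_add_card_le:
  assumes g: "graph V E" and h: "half_unique_optimum V E"
    and Z: "Z \<subseteq> V" "independent E Z" "surplus V E Z = 1" and z: "z \<notin> V"
  shows "MM (rr3_edges V E Z z) + card Z \<le> MM E"
proof -
  obtain M' where M': "matching (rr3_edges V E Z z) M'" "card M' = MM (rr3_edges V E Z z)"
    using MM_attained[OF finite_rr3_edges[OF g]] by blast
  have "finite M'"
    using M'(1) finite_subset[OF _ finite_rr3_edges[OF g]] unfolding matching_def by blast
  moreover have "nbh V E Z \<noteq> {}" using Z(3) unfolding surplus_def by auto
  ultimately obtain M n where M: "matching E M" "card M = card M'"
    and avoid: "\<forall>e\<in>M. e \<inter> (Z \<union> (nbh V E Z - {n})) = {}"
    using rr3_matching_lift[OF g z _ M'(1)] by blast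
  obtain f where f: "inj_on f Z" "\<forall>a\<in>Z. f a \<in> nbh V E Z - {n} \<and> {a, f a} \<in> E"
    using independent_matchable_into_nbh[OF g h Z(1,2)] by blast
  define S where "S = (\<lambda>a. {a, f a}) ` Z"
  have "\<forall>a\<in>Z. f a \<notin> Z" using f(2) unfolding nbh_def by blast
  then have S: "matching E S" "card S = card Z"
    using matching_star[OF f(1)] f(2) unfolding S_def by auto
  have disjoint: "\<forall>e\<in>M. \<forall>e'\<in>S. e \<inter> e' = {}" using avoid f(2) unfolding S_def by blast
  then have "matching E (M \<union> S)" using M(1) S(1) by (intro matching_Un)
  moreover have "card (M \<union> S) = card M + card Z"
  proof -
    have "M \<subseteq> E" "S \<subseteq> E" using M(1) S(1) unfolding matching_def by blast+
    then have "finite M" "finite S" using finite_subset graph_finite_edges[OF g] by blast+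
    moreover have "M \<inter> S = {}"
    proof (rule ccontr)
      assume "M \<inter> S \<noteq> {}"
      then obtain a where a: "a \<in> Z" "{a, f a} \<in> M" unfolding S_def by blast
      then show False using avoid[rule_format, OF a(2)] by blast
    qed
    ultimately show ?thesis using S(2) by (simp add: card_Un_disjoint)
  qed
  ultimately show ?thesis
    using card_le_MM[OF graph_finite_edges[OF g], of "M \<union> S"] M(2) M'(2) by simp
qed

theorem lemma9:
  fixes V :: "'a set" and E :: "'a set set" and k :: nat and Z :: "'a set" and z :: 'a
  assumes "graph V E"
    and "half_unique_optimum V E"
    and "\<not> (\<exists>Y. Y \<subseteq> V \<and> independent E Y \<and> surplus V E Y = 1 \<and> \<not> independent E (nbh V E Y))"
    and "Z \<subseteq> V" and "independent E Z" and "surplus V E Z = 1" and "independent E (nbh V E Z)"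
    and "z \<notin> V"
  shows "(real k - real (card Z)) + real (MM (rr3_edges V E Z z))
           - 2 * LP (rr3_vertices V E Z z) (rr3_edges V E Z z)
         \<le> real k + real (MM E) - 2 * LP V E"
proof -
  have "LP V E \<le> real (card Z) + LP (rr3_vertices V E Z z) (rr3_edges V E Z z)"
    using LP_le_LP_rr3 assms(1,4-8) .
  moreover have "MM (rr3_edges V E Z z) + card Z \<le> MM E"
    using MM_rr3_add_card_le assms(1,2,4-6,8) .
  ultimately show ?thesis by linarith
qed

end
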